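(* Let $F$ be a field containing $\mathcal K$ and let $w_1,\dots,w_N:\mathbb C\to F$ be functions with $L(u)w_m(u)=0$ for all $1\le m\le N$, $u\in\mathbb C$, and such that the Casorati determinant $[1,2,\dots,N]$ is nonzero for every $u$. Then for $0\le a\le N$, \[ T^{(a)}_1\Bigl(u+\frac a2\Bigr)=\frac{[0,1,\dots,a-1,a+1,\dots,N]}{[1,2,\dots,N]}. \]
   Context: Fix an integer $n\ge 2$ and put $N=2n+2$. Let $Q_a(u)$ ($1\le a\le n$, $u\in\mathbb C$) be algebraically independent commuting indeterminates, $\mathcal K$ the field of fractions of $\mathbb Z[Q_a(u)^{\pm1}]$. Put $d_a=1+\delta_{an}$, $Y_a(u)=Q_a(u-\frac{d_a}{2})/Q_a(u+\frac{d_a}{2})$ for $1\le a\le n$, $Y_0(u)=1$. Let $J=\{1\prec2\prec\cdots\prec n\prec\bar n\prec\cdots\prec\bar2\prec\bar1\}$. For $1\le a\le n$ set $z_a(u)=\frac{Y_a(u+\frac a2)}{Y_{a-1}(u+\frac{a+1}2)}$, $z_{\bar a}(u)=\frac{Y_{a-1}(u+\frac{2n-a+3}2)}{Y_a(u+\frac{2n-a+4}2)}$; set $x_a(u)=z_a(u)$, $x_{2n+3-a}(u)=z_{\bar a}(u)$ for $1\le a\le n$, and $x_{n+1}(u)=-x_{n+2}(u)=\frac{Q_n(u+\frac n2)Q_n(u+\frac{n+4}2)}{Q_n(u+\frac{n+2}2)^2}$. $D$ is the shift operator ($D\,c(u)=c(u+1)D$); a difference operator $\sum_jc_j(u)D^j$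 acts on $w:\mathbb C\to F$ by $w\mapsto\sum_jc_j(u)w(u+j)$. Define $L(u)=\prod_{i=1}^{N}(x_i(u+n+1-i)-D)$ with factors ordered $i=1,\dots,N$ from left to right. For $1\le a\le n$ define $T^{(a)}_1(u)$ by $T^{(a)}_1(u+\frac12)=\sum z_{i_1}(u+\frac{a-1}2)\cdots z_{i_a}(u-\frac{a-1}2)$, the $k$-th factor being $z_{i_k}(u+\frac{a+1-2k}{2})$, summed over $(i_1,\dots,i_a)\in J^a$ with $i_1\prec\cdots\prec i_a$ such that whenever $i_k=c$, $i_l=\bar c$ ($1\le c\le n$) one has $n+k-l\ge c$. Set $T^{(0)}_1=1$, $T^{(a)}_1=0$ for $a<0$, $T^{(n+1)}_1=0$, and $T^{(a)}_1=-T^{(N-a)}_1$ for $a\ge n+2$ (so $T^{(N)}_1=-1$). Casorati determinants: for integers $i_1,\dots,i_m$ ($m\le N$), $[i_1,\dots,i_m]$ denotes the function $u\mapsto\det\bigl(w_r(u+i_s)\bigr)_{1\le r,s\le m}$. *)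

theory Defs
  imports Complex_Main "Jordan_Normal_Form.Determinant"
begin

text \<open>Algebraic independence over the integers of the family f restricted to the index set I:
  no nonzero integer polynomial (in finitely many distinct variables, coefficients indexed by
  exponent vectors e, finitely supported) vanishes at f.  "F contains K" is rendered as: the
  images of the indeterminates Q_a(u) in F are algebraically independent over Z.\<close>
definition alg_indep_Z :: "('i \<Rightarrow> 'f::field) \<Rightarrow> 'i set \<Rightarrow> bool" where
  "alg_indep_Z f I \<longleftrightarrow>
    (\<forall>(vs :: 'i list) (c :: nat list \<Rightarrow> int).
       distinct vs \<and> set vs \<subseteq> I \<and> finite {e. c e \<noteq> 0} \<and>
       (\<forall>e. c e \<noteq> 0 \<longrightarrow> length e = length vs) \<and>
       (\<Sum>e\<in>{e. c e \<noteq> 0}. of_int (c e) * (\<Prod>j<length vs. f (vs ! j) ^ (e ! j))) = 0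
       \<longrightarrow> (\<forall>e. c e = 0))"

definition dd :: "nat \<Rightarrow> nat \<Rightarrow> complex" where
  "dd n a = (if a = n then 2 else 1)"

definition YY :: "nat \<Rightarrow> (nat \<Rightarrow> complex \<Rightarrow> 'f::field) \<Rightarrow> nat \<Rightarrow> complex \<Rightarrow> 'f" where
  "YY n Q a u = (if a = 0 then 1 else Q a (u - dd n a / 2) / Q a (u + dd n a / 2))"

text \<open>The alphabet J = {1 < ... < n < bar n < ... < bar 1} is encoded as {1..2n}:
  c \<mapsto> c and bar c \<mapsto> 2n+1-c, preserving the order.\<close>
definition zz :: "nat \<Rightarrow> (nat \<Rightarrow> complex \<Rightarrow> 'f::field) \<Rightarrow> nat \<Rightarrow> complex \<Rightarrow> 'f" where
  "zz n Q j u =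
    (if j \<le> n then YY n Q j (u + of_nat j / 2) / YY n Q (j - 1) (u + (of_nat j + 1) / 2)
     else (let a = 2 * n + 1 - j in
           YY n Q (a - 1) (u + (2 * of_nat n - of_nat a + 3) / 2) /
           YY n Q a (u + (2 * of_nat n - of_nat a + 4) / 2)))"

definition xx :: "nat \<Rightarrow> (nat \<Rightarrow> complex \<Rightarrow> 'f::field) \<Rightarrow> nat \<Rightarrow> complex \<Rightarrow> 'f" where
  "xx n Q i u =
    (if i \<le> n then zz n Q i u
     else if i = n + 1 then
       Q n (u + of_nat n / 2) * Q n (u + (of_nat n + 4) / 2) / (Q n (u + (of_nat n + 2) / 2))^2
     else if i = n + 2 then
       - (Q n (u + of_nat n / 2) * Q n (u + (of_nat n + 4) / 2) / (Q n (u + (of_nat n + 2) / 2))^2)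
     else zz n Q (2 * n + 1 - (2 * n + 3 - i)) u)"

text \<open>Action of the product of factors i = k..N (ordered left to right) of
  L(u) = prod_{i=1}^N (x_i(u+n+1-i) - D) on w; the factor (c(u) - D) maps v to
  u \<mapsto> c(u) v(u) - v(u+1).\<close>
fun Lpart :: "nat \<Rightarrow> (nat \<Rightarrow> complex \<Rightarrow> 'f::field) \<Rightarrow> nat \<Rightarrow> nat \<Rightarrow> (complex \<Rightarrow> 'f) \<Rightarrow> complex \<Rightarrow> 'f" where
  "Lpart n Q 0 k w = w"
| "Lpart n Q (Suc m) k w =
     (let v = Lpart n Q m (Suc k) w in
      (\<lambda>u. xx n Q k (u + of_nat n + 1 - of_nat k) * v u - v (u + 1)))"

definition Lop :: "nat \<Rightarrow> (nat \<Rightarrow> complex \<Rightarrow> 'f::field) \<Rightarrow> (complex \<Rightarrow> 'f) \<Rightarrow> complex \<Rightarrow> 'f" where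
  "Lop n Q w = Lpart n Q (2 * n + 2) 1 w"

text \<open>Admissible tableaux for T^(a)_1, 1 \<le> a \<le> n: strictly increasing tuples in J^a
  (0-based positions k, l here; the difference k - l is unchanged).\<close>
definition adm :: "nat \<Rightarrow> nat \<Rightarrow> nat list set" where
  "adm n a = {is. length is = a \<and> sorted_wrt (<) is \<and> set is \<subseteq> {1..2 * n} \<and>
     (\<forall>k<a. \<forall>l<a. \<forall>c. 1 \<le> c \<and> c \<le> n \<and> is ! k = c \<and> is ! l = 2 * n + 1 - c
        \<longrightarrow> int n + int k - int l \<ge> int c)}"

definition TT :: "nat \<Rightarrow> (nat \<Rightarrow> complex \<Rightarrow> 'f::field) \<Rightarrow> nat \<Rightarrow> complex \<Rightarrow> 'f" where
  "TT n Q a v =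
    (if a = 0 then 1
     else if a \<le> n then
       (\<Sum>is\<in>adm n a. \<Prod>k<a. zz n Q (is ! k) ((v - 1/2) + (of_nat a - 1 - 2 * of_nat k) / 2))
     else if a = n + 1 then 0
     else if a \<le> 2 * n + 2 then
       - (if 2 * n + 2 - a = 0 then 1 else
          (\<Sum>is\<in>adm n (2 * n + 2 - a). \<Prod>k<(2 * n + 2 - a).
              zz n Q (is ! k) ((v - 1/2) + (of_nat (2 * n + 2 - a) - 1 - 2 * of_nat k) / 2)))
     else 0)"

text \<open>Casorati determinant [i_1,...,i_m](u) = det (w_r(u+i_s))_{r,s}; w_1..w_m are w 1 .. w m.\<close>
definition casorati :: "(nat \<Rightarrow> complex \<Rightarrow> 'f::field) \<Rightarrow> int list \<Rightarrow> complex \<Rightarrow> 'f" where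
  "casorati w idx u = det (mat (length idx) (length idx)
      (\<lambda>(r, s). w (r + 1) (u + of_int (idx ! s))))"

end

(* Write L(u) = sum_j (-1)^j E_(N-j)(u) D^j. As L w_m = 0 for every m and E_N = -1, the column
   (w_m(u))_m is the combination of the columns (w_m(u+j))_m, 1 <= j <= N, with coefficients
   (-1)^j E_(N-j)(u), and Cramer's rule gives [0,..,a-hat,..,N]/[1,..,N] = -E_(N-a)(u).
   It remains to show T^(a)(u+a/2) = -E_(N-a)(u).

   Let E^(k) be the coefficients of the product of the middle factors k, ..., N+1-k of L. Since
   x_(n+2) = -x_(n+1), the coefficients E^(n+1) are antisymmetric about degree 1 up to a twist by a
   ratio of Y_n's, and since x_k and x_(bar k) are reciprocal ratios of shifted Y_k and Y_(k-1),
   this twisted antisymmetry of E^(k) about degree n+2-k propagates outwards; as 2 is invertible,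
   the middle coefficients vanish. Below the middle, E^(k)_s and the sum over admissible tableaux
   of length s in the letters k, ..., bar k satisfy the same recursion: splitting off the outer
   factors x_k and x_(bar k) corresponds to splitting off a first letter k and a last letter bar k.
   For k = 1 the twist is trivial, which gives T^(a) for a <= n, T^(n+1) = 0 and
   T^(a) = -T^(N-a) for a > n+1. *)

theory Submission
  imports Defs
begin

lemma alg_indep_Z_nonzero:
  assumes "alg_indep_Z f I" and "i \<in> I"
  shows "f i \<noteq> 0"
proof
  assume zero: "f i = 0"
  define c where "c = (\<lambda>e::nat list. if e = [1] then (1::int) else 0)"
  have supp: "{e. c e \<noteq> 0} = {[1]}"
    unfolding c_def by auto
  have "distinct [i] \<and> set [i] \<subseteq> I \<and> finite {e. c e \<noteq> 0} \<and> (\<forall>e. c e \<noteq> 0 \<longrightarrow> length e = length [i]) \<and>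
      (\<Sum>e\<in>{e. c e \<noteq> 0}. of_int (c e) * (\<Prod>j<length [i]. f ([i] ! j) ^ (e ! j))) = 0"
    using assms(2) zero unfolding supp by (auto simp: c_def)
  then have "\<forall>e. c e = 0"
    using assms(1) unfolding alg_indep_Z_def by blast
  then show False
    unfolding c_def by (metis one_neq_zero)
qed

lemma alg_indep_Z_of_int_nonzero:
  assumes "alg_indep_Z (f :: 'i \<Rightarrow> 'f::field) I" and "c \<noteq> 0"
  shows "(of_int c :: 'f) \<noteq> 0"
proof
  assume zero: "(of_int c :: 'f) = 0"
  define d where "d = (\<lambda>e::nat list. if e = [] then c else 0)"
  have supp: "{e. d e \<noteq> 0} = {[]}"
    unfolding d_def using assms(2) by auto
  have "distinct ([] :: 'i list) \<and> set [] \<subseteq> I \<and> finite {e. d e \<noteq> 0} \<and>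
      (\<forall>e. d e \<noteq> 0 \<longrightarrow> length e = length ([] :: 'i list)) \<and>
      (\<Sum>e\<in>{e. d e \<noteq> 0}. of_int (d e) * (\<Prod>j<length ([] :: 'i list). f ([] ! j) ^ (e ! j))) = 0"
    using zero unfolding supp by (auto simp: d_def)
  then have "\<forall>e. d e = 0"
    using assms(1) unfolding alg_indep_Z_def by blast
  then show False
    unfolding d_def using assms(2) by metis
qed

section \<open>Products of first-order difference operators\<close>

fun diff_op_prod :: "(nat \<Rightarrow> complex \<Rightarrow> 'f::field) \<Rightarrow> nat \<Rightarrow> nat \<Rightarrow> (complex \<Rightarrow> 'f) \<Rightarrow> complex \<Rightarrow> 'f" where
  "diff_op_prod c 0 k w = w"
| "diff_op_prod c (Suc m) k w =
     (\<lambda>u. c k u * diff_op_prod c m (Suc k) w u - diff_op_prod c m (Suc k) w (u + 1))"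

(* diff_op_coeff c m k s u is the coefficient of (-1)^(m-s) D^(m-s) in the product
   (c_k - D) ... (c_(k+m-1) - D), see diff_op_prod_expand: s factors contribute c, m - s contribute D. *)
fun diff_op_coeff :: "(nat \<Rightarrow> complex \<Rightarrow> 'f::field) \<Rightarrow> nat \<Rightarrow> nat \<Rightarrow> int \<Rightarrow> complex \<Rightarrow> 'f" where
  "diff_op_coeff c 0 k s u = (if s = 0 then 1 else 0)"
| "diff_op_coeff c (Suc m) k s u =
     c k u * diff_op_coeff c m (Suc k) (s - 1) u + diff_op_coeff c m (Suc k) s (u + 1)"

lemma diff_op_coeff_out_of_range: "s < 0 \<or> s > int m \<Longrightarrow> diff_op_coeff c m k s u = 0"
  by (induction m arbitrary: k s u) auto

lemma diff_op_coeff_degree_0 [simp]: "diff_op_coeff c m k 0 u = 1"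
  by (induction m arbitrary: k u) (auto simp: diff_op_coeff_out_of_range)

lemma diff_op_prod_expand:
  "diff_op_prod c m k w u = (\<Sum>j\<le>m. (-1)^j * diff_op_coeff c m k (int m - int j) u * w (u + of_nat j))"
proof (induction m arbitrary: k u)
  case 0
  then show ?case by simp
next
  case (Suc m)
  let ?E = "diff_op_coeff c m (Suc k)"
  have "diff_op_prod c (Suc m) k w u =
      (\<Sum>j\<le>m. c k u * ((-1)^j * ?E (int m - int j) u * w (u + of_nat j)))
    - (\<Sum>j\<le>m. (-1)^j * ?E (int m - int j) (u + 1) * w (u + 1 + of_nat j))"
    by (simp add: Suc.IH sum_distrib_left)
  also have "(\<Sum>j\<le>m. c k u * ((-1)^j * ?E (int m - int j) u * w (u + of_nat j)))
     = (\<Sum>j\<le>Suc m. c k u * ((-1)^j * ?E (int (Suc m) - int j - 1) u * w (u + of_nat j)))"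
    by (simp add: diff_op_coeff_out_of_range)
  also have "(\<Sum>j\<le>m. (-1)^j * ?E (int m - int j) (u + 1) * w (u + 1 + of_nat j))
     = (\<Sum>j\<le>Suc m. - ((-1)^j * ?E (int (Suc m) - int j) (u + 1) * w (u + of_nat j)))"
    by (subst sum.atMost_Suc_shift) (simp add: diff_op_coeff_out_of_range add_ac)
  also have "(\<Sum>j\<le>Suc m. c k u * ((-1)^j * ?E (int (Suc m) - int j - 1) u * w (u + of_nat j)))
      - (\<Sum>j\<le>Suc m. - ((-1)^j * ?E (int (Suc m) - int j) (u + 1) * w (u + of_nat j)))
    = (\<Sum>j\<le>Suc m. (-1)^j * diff_op_coeff c (Suc m) k (int (Suc m) - int j) u * w (u + of_nat j))"
    unfolding sum_subtractf[symmetric] by (rule sum.cong) (simp_all add: algebra_simps)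
  finally show ?case .
qed

lemma diff_op_coeff_Suc_right:
  "diff_op_coeff c (Suc m) k s u =
     diff_op_coeff c m k s u + diff_op_coeff c m k (s - 1) u * c (k + m) (u + of_nat m + 1 - of_int s)"
proof (induction m arbitrary: k s u)
  case 0
  then show ?case by (auto simp: algebra_simps)
next
  case (Suc m)
  have "diff_op_coeff c (Suc (Suc m)) k s u =
      c k u * diff_op_coeff c (Suc m) (Suc k) (s - 1) u + diff_op_coeff c (Suc m) (Suc k) s (u + 1)"
    by (rule diff_op_coeff.simps(2))
  also have "\<dots> = c k u * (diff_op_coeff c m (Suc k) (s - 1) u
        + diff_op_coeff c m (Suc k) (s - 2) u * c (Suc k + m) (u + of_nat m + 2 - of_int s))
      + (diff_op_coeff c m (Suc k) s (u + 1)
        + diff_op_coeff c m (Suc k) (s - 1) (u + 1) * c (Suc k + m) (u + of_nat m + 2 - of_int s))"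
    by (simp only: Suc.IH) (simp add: algebra_simps)
  finally show ?case
    by (simp add: algebra_simps)
qed

lemma diff_op_coeff_two_sided:
  "diff_op_coeff c (Suc (Suc m)) k s u =
     diff_op_coeff c m (Suc k) s (u + 1)
   + c k u * diff_op_coeff c m (Suc k) (s - 1) u
   + diff_op_coeff c m (Suc k) (s - 1) (u + 1) * c (Suc k + m) (u + of_nat m + 2 - of_int s)
   + c k u * diff_op_coeff c m (Suc k) (s - 2) u * c (Suc k + m) (u + of_nat m + 2 - of_int s)"
proof -
  have "diff_op_coeff c (Suc (Suc m)) k s u =
      c k u * diff_op_coeff c (Suc m) (Suc k) (s - 1) u + diff_op_coeff c (Suc m) (Suc k) s (u + 1)"
    by (rule diff_op_coeff.simps(2))
  then show ?thesis
    by (simp only: diff_op_coeff_Suc_right) (simp add: algebra_simps)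
qed

lemma diff_op_prod_eq_0_recurrence:
  assumes "diff_op_prod c m k w u = 0" and "diff_op_coeff c m k (int m) u = -1"
  shows "w u = (\<Sum>t<m. (-1)^(Suc t) * diff_op_coeff c m k (int m - int (Suc t)) u * w (u + of_nat (Suc t)))"
proof -
  let ?f = "\<lambda>j. (-1)^j * diff_op_coeff c m k (int m - int j) u * w (u + of_nat j)"
  have "0 = sum ?f {..m}"
    using assms(1) unfolding diff_op_prod_expand by simp
  also have "\<dots> = - w u + (\<Sum>t<m. ?f (Suc t))"
    unfolding sum.atMost_shift using assms(2) by simp
  finally show ?thesis
    by (simp add: eq_neg_iff_add_eq_0 add.commute)
qed

(* From here on the recursion is unfolded only explicitly: it also fires on numeral lengths such as 2 * n + 2. *)
declare diff_op_coeff.simps(2) [simp del]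

section \<open>Skew-palindromic coefficients\<close>

definition skew_palindromic :: "(int \<Rightarrow> complex \<Rightarrow> 'f::field) \<Rightarrow> int \<Rightarrow> (complex \<Rightarrow> 'f) \<Rightarrow> bool" where
  "skew_palindromic E r \<phi> \<longleftrightarrow>
     (\<forall>j u. E (r + j) u = - (\<phi> (u - of_int j) / \<phi> u) * E (r - j) (u - of_int j))"

lemma skew_palindromic_centre:
  fixes E :: "int \<Rightarrow> complex \<Rightarrow> 'f::field"
  assumes "skew_palindromic E r \<phi>" and "(2::'f) \<noteq> 0" and "\<phi> u \<noteq> 0"
  shows "E r u = 0"
proof -
  have "E (r + 0) u = - (\<phi> (u - of_int 0) / \<phi> u) * E (r - 0) (u - of_int 0)"
    using assms(1) unfolding skew_palindromic_def by blast
  then have "E r u = - E r u"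
    using assms(3) by simp
  then have "2 * E r u = 0"
    unfolding mult_2 by (metis add.right_inverse)
  then show ?thesis
    using assms(2) by simp
qed

lemma skew_palindromic_two_factors:
  assumes nz: "\<And>v. \<phi> v \<noteq> 0"
    and anti: "\<And>v. c (Suc k) v = - c k (v - 1)"
    and prod: "\<And>v. c k v * c k (v - 1) = \<phi> (v - 1) / \<phi> v"
  shows "skew_palindromic (diff_op_coeff c 2 k) 1 \<phi>"
  unfolding skew_palindromic_def
proof (intro allI)
  fix j :: int and u :: complex
  have coeff: "diff_op_coeff c 2 k s v =
      (if s = 0 then 1 else if s = 2 then - (\<phi> (v - 1) / \<phi> v) else 0)" for s v
    using prod[of v] by (simp add: numeral_2_eq_2 anti diff_op_coeff.simps)
  consider "j = 1" | "j = -1" | "j \<noteq> 1" "j \<noteq> -1" by blast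
  then show "diff_op_coeff c 2 k (1 + j) u = - (\<phi> (u - of_int j) / \<phi> u) * diff_op_coeff c 2 k (1 - j) (u - of_int j)"
  proof cases
    case 1
    then show ?thesis by (simp add: coeff)
  next
    case 2
    then show ?thesis using nz[of u] nz[of "u + 1"] by (simp add: coeff)
  next
    case 3
    then show ?thesis by (simp add: coeff)
  qed
qed

(* The outer factors alpha/beta and beta/alpha turn the twist alpha of the inner product into the twist beta. *)
lemma skew_palindromic_extend:
  fixes c :: "nat \<Rightarrow> complex \<Rightarrow> 'f::field" and r :: nat
  assumes nz: "\<And>v. \<alpha> v \<noteq> 0" "\<And>v. \<beta> v \<noteq> 0"
    and left: "\<And>v. c k v = \<alpha> v / \<beta> v"
    and right: "\<And>v. c (Suc k + 2 * r) (v + of_nat r + 1) = \<beta> v / \<alpha> (v + 1)"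
    and inner: "skew_palindromic (diff_op_coeff c (2 * r) (Suc k)) r \<alpha>"
  shows "skew_palindromic (diff_op_coeff c (Suc (Suc (2 * r))) k) (r + 1) \<beta>"
  unfolding skew_palindromic_def
proof (intro allI)
  fix j :: int and u :: complex
  let ?E = "diff_op_coeff c (2 * r) (Suc k)"
  have sym: "?E (int r + i) v = - (\<alpha> (v - of_int i) / \<alpha> v) * ?E (int r - i) (v - of_int i)" for i v
    using inner unfolding skew_palindromic_def by blast
  define g1 where "g1 = ?E (int r - j - 1) (u - of_int j)"
  define g2 where "g2 = ?E (int r - j) (u - of_int j)"
  define g3 where "g3 = ?E (int r - j) (u - of_int j + 1)"
  define g4 where "g4 = ?E (int r - j + 1) (u - of_int j + 1)"
  have right': "c (Suc k + 2 * r) (v + of_nat (2 * r) + 2 - of_int s) = \<beta> w / \<alpha> (w + 1)"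
    if "w = v + of_nat r + 1 - of_int s" for v w s
  proof -
    have "v + of_nat (2 * r) + 2 - of_int s = w + of_nat r + 1"
      using that by (simp add: algebra_simps)
    then show ?thesis by (simp only: right)
  qed
  have "diff_op_coeff c (Suc (Suc (2 * r))) k (int (r + 1) + j) u =
      - (\<alpha> (u - of_int j) / \<alpha> (u + 1)) * g1 + \<alpha> u / \<beta> u * (- (\<alpha> (u - of_int j) / \<alpha> u) * g2)
      + (- (\<alpha> (u - of_int j + 1) / \<alpha> (u + 1)) * g3) * (\<beta> (u - of_int j) / \<alpha> (u - of_int j + 1))
      + \<alpha> u / \<beta> u * (- (\<alpha> (u - of_int j + 1) / \<alpha> u) * g4) * (\<beta> (u - of_int j) / \<alpha> (u - of_int j + 1))"
    unfolding diff_op_coeff_two_sided left right'[OF refl]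
    using sym[of "j + 1" "u + 1"] sym[of j u] sym[of j "u + 1"] sym[of "j - 1" u]
    by (simp add: g1_def g2_def g3_def g4_def algebra_simps)
  also have "\<dots> = - (\<beta> (u - of_int j) / \<beta> u) *
      (g4 + \<alpha> (u - of_int j) / \<beta> (u - of_int j) * g2 + g3 * (\<beta> u / \<alpha> (u + 1))
       + \<alpha> (u - of_int j) / \<beta> (u - of_int j) * g1 * (\<beta> u / \<alpha> (u + 1)))"
    using nz by (simp add: field_simps)
  also have "\<dots> = - (\<beta> (u - of_int j) / \<beta> u) *
      diff_op_coeff c (Suc (Suc (2 * r))) k (int (r + 1) - j) (u - of_int j)"
    unfolding diff_op_coeff_two_sided left right'[OF refl]
    by (simp add: g1_def g2_def g3_def g4_def algebra_simps)
  finally show "diff_op_coeff c (Suc (Suc (2 * r))) k (int (r + 1) + j) u =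
      - (\<beta> (u - of_int j) / \<beta> u) * diff_op_coeff c (Suc (Suc (2 * r))) k (int (r + 1) - j) (u - of_int j)" .
qed

section \<open>Casorati determinants\<close>

lemma upto_omit_eq:
  assumes "1 \<le> a" "a \<le> N"
  shows "filter (\<lambda>i. i \<noteq> int a) [0..int N] = [0..int a - 1] @ [int a + 1..int N]"
proof -
  have "[0..int N] = [0..int a - 1] @ int a # [int a + 1..int N]"
    using upto_split1[of 0 "int a" "int N"] upto_rec1[of "int a" "int N"] assms by simp
  then show ?thesis
    by (simp add: filter_True)
qed

lemma length_upto_omit: "1 \<le> a \<Longrightarrow> a \<le> N \<Longrightarrow> length (filter (\<lambda>i. i \<noteq> int a) [0..int N]) = N"
  by (simp add: upto_omit_eq)

lemma nth_upto_omit: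
  "1 \<le> a \<Longrightarrow> a \<le> N \<Longrightarrow> s < N \<Longrightarrow>
    filter (\<lambda>i. i \<noteq> int a) [0..int N] ! s = (if s < a then int s else int s + 1)"
  by (simp add: upto_omit_eq nth_append)

(* The recurrence makes the omitted column 0 a combination of the columns 1, ..., N; Cramer's rule
   extracts its coefficient c a after moving that column to position a. *)
lemma casorati_omit_column:
  fixes w :: "nat \<Rightarrow> complex \<Rightarrow> 'f::field"
  assumes rec: "\<And>m. 1 \<le> m \<Longrightarrow> m \<le> N \<Longrightarrow> w m u = (\<Sum>t<N. c (Suc t) * w m (u + of_nat (Suc t)))"
    and a: "1 \<le> a" "a \<le> N"
  shows "casorati w (filter (\<lambda>i. i \<noteq> int a) [0..int N]) u = (-1)^(a - 1) * c a * casorati w [1..int N] u"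
proof -
  define A where "A = mat N N (\<lambda>(r, s). w (r + 1) (u + of_int ([1..int N] ! s)))"
  define x where "x = vec N (\<lambda>t. c (Suc t))"
  define B where "B = replace_col A (A *\<^sub>v x) (a - 1)"
  have A: "A \<in> carrier_mat N N" and x: "x \<in> carrier_vec N" and B: "B \<in> carrier_mat N N"
    and a': "a - 1 < N"
    using a unfolding A_def x_def B_def replace_col_def by auto
  have A_entry: "A $$ (r, s) = w (r + 1) (u + of_nat (Suc s))" if "r < N" "s < N" for r s
    using that unfolding A_def by simp
  have Ax: "(A *\<^sub>v x) $ r = w (r + 1) u" if r: "r < N" for r
  proof -
    have "(A *\<^sub>v x) $ r = (\<Sum>t<N. c (Suc t) * w (r + 1) (u + of_nat (Suc t)))"
      using A x r by (auto simp: mult_mat_vec_def scalar_prod_def lessThan_atLeast0 A_entry x_def mult.commute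
          intro!: sum.cong)
    also have "\<dots> = w (r + 1) u"
      using rec[of "r + 1"] r by simp
    finally show ?thesis .
  qed
  have B_entry: "B $$ (r, s) = (if s = a - 1 then w (r + 1) u else w (r + 1) (u + of_nat (Suc s)))"
    if "r < N" "s < N" for r s
    using that A Ax A_entry unfolding B_def replace_col_def by auto
  have "mat N N (\<lambda>(r, s). w (r + 1) (u + of_int (filter (\<lambda>i. i \<noteq> int a) [0..int N] ! s)))
      = swap_col_to_front B (a - 1)"
    unfolding swap_col_to_front_result[OF B a']
    by (rule eq_matI)
      (use a a' in \<open>auto simp: nth_upto_omit B_entry add.commute\<close>)
  then have "casorati w (filter (\<lambda>i. i \<noteq> int a) [0..int N]) u = det (swap_col_to_front B (a - 1))"
    unfolding casorati_def length_upto_omit[OF a] by simp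
  also have "\<dots> = (-1)^(a - 1) * det B"
    by (rule swap_col_to_front_det[OF B a'])
  also have "det B = x $ (a - 1) * det A"
    unfolding B_def by (rule cramer_lemma_mat[OF A x a'])
  also have "x $ (a - 1) = c a"
    using a a' unfolding x_def by simp
  also have "det A = casorati w [1..int N] u"
    unfolding A_def casorati_def by simp
  finally show ?thesis by simp
qed

lemma casorati_ratio_eq_diff_op_coeff:
  fixes w :: "nat \<Rightarrow> complex \<Rightarrow> 'f::field"
  assumes annihilated: "\<And>m. 1 \<le> m \<Longrightarrow> m \<le> N \<Longrightarrow> diff_op_prod c N k (w m) u = 0"
    and top: "diff_op_coeff c N k (int N) u = -1"
    and nonzero: "casorati w [1..int N] u \<noteq> 0" and a: "a \<le> N"
  shows "casorati w (filter (\<lambda>i. i \<noteq> int a) [0..int N]) u / casorati w [1..int N] u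
    = - diff_op_coeff c N k (int N - int a) u"
proof (cases "a = 0")
  case True
  have "filter (\<lambda>i. i \<noteq> 0) [0..int N] = [1..int N]"
    by (simp add: upto_rec1 filter_True)
  then show ?thesis
    using True top nonzero by simp
next
  case False
  define e where "e j = (-1)^j * diff_op_coeff c N k (int N - int j) u" for j
  have "casorati w (filter (\<lambda>i. i \<noteq> int a) [0..int N]) u = (-1)^(a - 1) * e a * casorati w [1..int N] u"
    by (rule casorati_omit_column)
      (use diff_op_prod_eq_0_recurrence[OF annihilated top] False a in \<open>auto simp: e_def\<close>)
  moreover have "(-1::'f)^(a - 1) * (-1)^a = -1"
    using False by (cases a) simp_all
  ultimately show ?thesis
    using nonzero by (simp add: e_def mult.assoc[symmetric])
qed

section \<open>Admissible tableaux\<close>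

lemma sorted_wrt_less_min_Cons:
  fixes xs :: "'a::linorder list"
  shows "sorted_wrt (<) xs \<Longrightarrow> \<forall>x\<in>set xs. k \<le> x \<Longrightarrow> k \<in> set xs \<Longrightarrow> \<exists>ys. xs = k # ys"
  by (cases xs) (auto dest: leD)

lemma sorted_wrt_less_max_snoc:
  fixes xs :: "'a::linorder list"
  shows "sorted_wrt (<) xs \<Longrightarrow> \<forall>x\<in>set xs. x \<le> m \<Longrightarrow> m \<in> set xs \<Longrightarrow> \<exists>ys. xs = ys @ [m]"
  by (cases xs rule: rev_exhaust) (auto simp: sorted_wrt_append dest: leD)

lemma sorted_wrt_less_bounded_cases:
  fixes ys :: "'a::linorder list"
  assumes sorted: "sorted_wrt (<) ys" and range: "\<forall>y\<in>set ys. lo \<le> y \<and> y \<le> hi"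
  obtains "lo \<notin> set ys" "hi \<notin> set ys"
  | zs where "ys = lo # zs" "hi \<notin> set zs"
  | xs where "ys = xs @ [hi]" "lo \<notin> set ys"
  | xs where "ys = lo # xs @ [hi]"
proof (cases "lo \<in> set ys")
  case True
  then obtain zs where zs: "ys = lo # zs"
    using sorted_wrt_less_min_Cons sorted range by blast
  show ?thesis
  proof (cases "hi \<in> set zs")
    case True
    then obtain xs where "zs = xs @ [hi]"
      using sorted_wrt_less_max_snoc[of zs hi] sorted range zs by auto
    then show ?thesis
      using that(4) zs by blast
  qed (use that(2) zs in blast)
next
  case False
  show ?thesis
  proof (cases "hi \<in> set ys")
    case True
    then obtain xs where "ys = xs @ [hi]"
      using sorted_wrt_less_max_snoc sorted range by blast
    then show ?thesis
      using that(3) False by blast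
  qed (use that(1) False in blast)
qed

(* The admissibility condition of adm (0-based positions p, q), restricted to the letters c >= k. *)
definition spaced :: "nat \<Rightarrow> nat \<Rightarrow> nat list \<Rightarrow> bool" where
  "spaced n k xs \<longleftrightarrow> (\<forall>p<length xs. \<forall>q<length xs.
     k \<le> xs ! p \<longrightarrow> xs ! p \<le> n \<longrightarrow> xs ! q = 2 * n + 1 - xs ! p \<longrightarrow> int q - int p \<le> int n - int (xs ! p))"

definition admissible_from :: "nat \<Rightarrow> nat \<Rightarrow> nat list \<Rightarrow> bool" where
  "admissible_from n k xs \<longleftrightarrow> sorted_wrt (<) xs \<and> set xs \<subseteq> {k..2 * n + 1 - k} \<and> spaced n k xs"

lemma spaced_Cons:
  assumes "k \<le> n"
  shows "spaced n k (k # xs) \<longleftrightarrow>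
    spaced n k xs \<and> (\<forall>q<length xs. xs ! q = 2 * n + 1 - k \<longrightarrow> int q + 1 \<le> int n - int k)"
  using assms unfolding spaced_def length_Cons All_less_Suc2 nth_Cons_0 nth_Cons_Suc by auto

lemma spaced_snoc:
  assumes "k \<le> n"
  shows "spaced n k (xs @ [2 * n + 1 - k]) \<longleftrightarrow>
    spaced n k xs \<and> (\<forall>p<length xs. xs ! p = k \<longrightarrow> int (length xs) - int p \<le> int n - int k)"
proof -
  have "2 * n + 1 - k = 2 * n + 1 - c \<longleftrightarrow> c = k" if "c \<le> n" for c
    using assms that by auto
  then show ?thesis
    using assms unfolding spaced_def length_append_singleton All_less_Suc nth_append_length
    by (auto simp: nth_append)
qed

lemma spaced_Suc_iff: "k \<notin> set xs \<Longrightarrow> spaced n (Suc k) xs \<longleftrightarrow> spaced n k xs"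
  unfolding spaced_def by (metis Suc_le_eq le_eq_less_or_eq nth_mem)

context
  fixes n k :: nat
  assumes kn: "k \<le> n"
begin

lemma admissible_from_Suc_range:
  assumes "admissible_from n (Suc k) xs" and "x \<in> set xs"
  shows "k < x" "x < 2 * n + 1 - k"
  using assms kn unfolding admissible_from_def by force+

lemma admissible_from_SucD:
  assumes "admissible_from n (Suc k) xs"
  shows "admissible_from n k xs"
  using assms admissible_from_Suc_range[OF assms] spaced_Suc_iff[of k xs n]
  unfolding admissible_from_def by force

lemma admissible_from_Cons:
  assumes "admissible_from n (Suc k) xs"
  shows "admissible_from n k (k # xs)"
  using assms admissible_from_SucD[OF assms] admissible_from_Suc_range[OF assms] kn
  unfolding admissible_from_def spaced_Cons[OF kn] by (force dest: nth_mem)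

lemma admissible_from_snoc:
  assumes "admissible_from n (Suc k) xs"
  shows "admissible_from n k (xs @ [2 * n + 1 - k])"
  using assms admissible_from_SucD[OF assms] admissible_from_Suc_range[OF assms] kn
  unfolding admissible_from_def spaced_snoc[OF kn] by (force dest: nth_mem simp: sorted_wrt_append)

lemma admissible_from_Cons_snoc:
  assumes "admissible_from n (Suc k) xs" and "length xs + 2 \<le> n + 1 - k"
  shows "admissible_from n k (k # xs @ [2 * n + 1 - k])"
  using assms admissible_from_snoc[OF assms(1)] admissible_from_Suc_range[OF assms(1)] kn
  unfolding admissible_from_def spaced_Cons[OF kn] by (auto simp: nth_append)

lemma admissible_from_Suc_iff:
  assumes "k \<notin> set xs" "2 * n + 1 - k \<notin> set xs"
  shows "admissible_from n (Suc k) xs \<longleftrightarrow> admissible_from n k xs"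
proof -
  have "{Suc k..2 * n + 1 - Suc k} = {k..2 * n + 1 - k} - {k, 2 * n + 1 - k}"
    using kn by auto
  then have "set xs \<subseteq> {Suc k..2 * n + 1 - Suc k} \<longleftrightarrow> set xs \<subseteq> {k..2 * n + 1 - k}"
    using assms by blast
  then show ?thesis
    using spaced_Suc_iff[OF assms(1)] unfolding admissible_from_def by blast
qed

lemma admissible_from_cases:
  assumes adm: "admissible_from n k ys"
  obtains "admissible_from n (Suc k) ys"
  | xs where "ys = k # xs" "admissible_from n (Suc k) xs"
  | xs where "ys = xs @ [2 * n + 1 - k]" "admissible_from n (Suc k) xs"
  | xs where "ys = k # xs @ [2 * n + 1 - k]" "admissible_from n (Suc k) xs" "length xs + 2 \<le> n + 1 - k"
proof -
  let ?b = "2 * n + 1 - k"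
  have sorted: "sorted_wrt (<) ys" and range: "\<forall>y\<in>set ys. k \<le> y \<and> y \<le> ?b"
    and sp: "spaced n k ys"
    using adm unfolding admissible_from_def by auto
  have to_Suc: "admissible_from n (Suc k) xs"
    if "sorted_wrt (<) xs" "set xs \<subseteq> {k..?b}" "k \<notin> set xs" "?b \<notin> set xs" "spaced n k xs" for xs
    using that admissible_from_Suc_iff[of xs] unfolding admissible_from_def by blast
  show ?thesis
  proof (cases rule: sorted_wrt_less_bounded_cases[OF sorted range])
    case 1
    then show ?thesis
      using that(1) adm admissible_from_Suc_iff by blast
  next
    case (2 zs)
    then have "admissible_from n (Suc k) zs"
      using sorted range sp spaced_Cons[OF kn] by (intro to_Suc) auto
    then show ?thesis
      using that(2) 2 by blast
  next
    case (3 xs)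
    then have "admissible_from n (Suc k) xs"
      using sorted range sp spaced_snoc[OF kn] by (intro to_Suc) (auto simp: sorted_wrt_append)
    then show ?thesis
      using that(3) 3 by blast
  next
    case (4 xs)
    then have "admissible_from n (Suc k) xs"
      using sorted range sp spaced_Cons[OF kn] spaced_snoc[OF kn] by (intro to_Suc) (auto simp: sorted_wrt_append)
    moreover have "length xs + 2 \<le> n + 1 - k"
      using sp kn unfolding 4 spaced_Cons[OF kn] by (auto simp: nth_append)
    ultimately show ?thesis
      using that(4) 4 by blast
  qed
qed

end

(* Indexed by an integer length, so that the recursion below needs no case distinction. *)
definition tableaux :: "nat \<Rightarrow> nat \<Rightarrow> int \<Rightarrow> nat list set" where
  "tableaux n k s = {xs. admissible_from n k xs \<and> int (length xs) = s}"

definition tableau_weight :: "nat \<Rightarrow> (nat \<Rightarrow> complex \<Rightarrow> 'f::field) \<Rightarrow> nat list \<Rightarrow> complex \<Rightarrow> 'f" where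
  "tableau_weight n Q xs v = (\<Prod>m<length xs. zz n Q (xs ! m) (v - of_nat m))"

definition tableau_sum :: "nat \<Rightarrow> (nat \<Rightarrow> complex \<Rightarrow> 'f::field) \<Rightarrow> nat \<Rightarrow> int \<Rightarrow> complex \<Rightarrow> 'f" where
  "tableau_sum n Q k s v = (\<Sum>xs\<in>tableaux n k s. tableau_weight n Q xs v)"

lemma adm_eq_tableaux: "adm n b = tableaux n 1 (int b)"
  unfolding adm_def tableaux_def admissible_from_def spaced_def by (auto simp: algebra_simps)

lemma finite_tableaux: "finite (tableaux n k s)"
proof (rule finite_subset)
  show "tableaux n k s \<subseteq> {xs. set xs \<subseteq> {k..2 * n + 1 - k} \<and> length xs = nat s}"
    unfolding tableaux_def admissible_from_def by auto
qed (rule finite_lists_length_eq, simp)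

lemma tableaux_0: "tableaux n k 0 = {[]}"
  unfolding tableaux_def admissible_from_def spaced_def by auto

lemma tableau_sum_0 [simp]: "tableau_sum n Q k 0 v = 1"
  by (simp add: tableau_sum_def tableaux_0 tableau_weight_def)

lemma tableau_sum_neg: "s < 0 \<Longrightarrow> tableau_sum n Q k s v = 0"
  by (simp add: tableau_sum_def tableaux_def)

lemma tableaux_too_long:
  assumes "k \<le> n + 1" "int (n + 1 - k) < s"
  shows "tableaux n k s = {}"
  using assms
proof (induction "n + 1 - k" arbitrary: k s)
  case 0
  then have "{k..2 * n + 1 - k} = {}" by auto
  then show ?case
    using 0 unfolding tableaux_def admissible_from_def by auto
next
  case (Suc i)
  have kn: "k \<le> n" and IH: "\<And>s. int i < s \<Longrightarrow> tableaux n (Suc k) s = {}"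
    using Suc by auto
  have i: "int i + 1 < s"
    using Suc.hyps(2) Suc.prems by linarith
  show ?case
  proof (rule ccontr)
    assume "tableaux n k s \<noteq> {}"
    then obtain ys where ys: "admissible_from n k ys" "int (length ys) = s"
      unfolding tableaux_def by auto
    show False
    proof (rule admissible_from_cases[OF kn ys(1)])
      assume "admissible_from n (Suc k) ys"
      then show False using IH[of s] ys(2) i unfolding tableaux_def by auto
    next
      fix xs assume "ys = k # xs" "admissible_from n (Suc k) xs"
      then show False using IH[of "s - 1"] ys(2) i unfolding tableaux_def by auto
    next
      fix xs assume "ys = xs @ [2 * n + 1 - k]" "admissible_from n (Suc k) xs"
      then show False using IH[of "s - 1"] ys(2) i unfolding tableaux_def by auto
    next
      fix xs assume "ys = k # xs @ [2 * n + 1 - k]" "length xs + 2 \<le> n + 1 - k"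
      then show False using ys(2) i Suc.hyps(2) by auto
    qed
  qed
qed

lemma tableau_weight_Cons: "tableau_weight n Q (y # xs) v = zz n Q y v * tableau_weight n Q xs (v - 1)"
  unfolding tableau_weight_def length_Cons prod.lessThan_Suc_shift by (simp add: algebra_simps)

lemma tableau_weight_snoc:
  "tableau_weight n Q (xs @ [y]) v = tableau_weight n Q xs v * zz n Q y (v - of_nat (length xs))"
  unfolding tableau_weight_def length_append_singleton prod.lessThan_Suc by (simp add: nth_append)

context
  fixes n k :: nat and s :: int
  assumes kn: "k \<le> n" and s: "s \<le> int (n + 1 - k)"
begin

lemma tableaux_decompose:
  "tableaux n k s = tableaux n (Suc k) s \<union> Cons k ` tableaux n (Suc k) (s - 1)
     \<union> (\<lambda>xs. xs @ [2 * n + 1 - k]) ` tableaux n (Suc k) (s - 1)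
     \<union> (\<lambda>xs. k # xs @ [2 * n + 1 - k]) ` tableaux n (Suc k) (s - 2)"
  (is "_ = ?A \<union> ?B \<union> ?C \<union> ?D")
proof
  show "tableaux n k s \<subseteq> ?A \<union> ?B \<union> ?C \<union> ?D"
  proof
    fix ys assume "ys \<in> tableaux n k s"
    then have ys: "admissible_from n k ys" "int (length ys) = s"
      unfolding tableaux_def by auto
    show "ys \<in> ?A \<union> ?B \<union> ?C \<union> ?D"
      by (rule admissible_from_cases[OF kn ys(1)]) (use ys in \<open>auto simp: tableaux_def\<close>)
  qed
next
  show "?A \<union> ?B \<union> ?C \<union> ?D \<subseteq> tableaux n k s"
    using s admissible_from_SucD[OF kn] admissible_from_Cons[OF kn] admissible_from_snoc[OF kn]
      admissible_from_Cons_snoc[OF kn]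
    unfolding tableaux_def by auto
qed

lemma tableau_sum_decompose:
  "tableau_sum n Q k s v = tableau_sum n Q (Suc k) s v
     + (\<Sum>xs\<in>tableaux n (Suc k) (s - 1). tableau_weight n Q (k # xs) v)
     + (\<Sum>xs\<in>tableaux n (Suc k) (s - 1). tableau_weight n Q (xs @ [2 * n + 1 - k]) v)
     + (\<Sum>xs\<in>tableaux n (Suc k) (s - 2). tableau_weight n Q (k # xs @ [2 * n + 1 - k]) v)"
proof -
  let ?b = "2 * n + 1 - k"
  let ?w = "\<lambda>xs. tableau_weight n Q xs v"
  define A where "A = tableaux n (Suc k) s"
  define B where "B = Cons k ` tableaux n (Suc k) (s - 1)"
  define C where "C = (\<lambda>xs. xs @ [?b]) ` tableaux n (Suc k) (s - 1)"
  define D where "D = (\<lambda>xs. k # xs @ [?b]) ` tableaux n (Suc k) (s - 2)"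
  have avoid: "k \<notin> set xs" "?b \<notin> set xs" if "xs \<in> tableaux n (Suc k) t" for xs t
    using that admissible_from_Suc_range[OF kn] unfolding tableaux_def by fastforce+
  have "xs \<in> A \<Longrightarrow> k \<notin> set xs \<and> ?b \<notin> set xs"
    and "xs \<in> B \<Longrightarrow> k \<in> set xs \<and> ?b \<notin> set xs"
    and "xs \<in> C \<Longrightarrow> k \<notin> set xs \<and> ?b \<in> set xs"
    and "xs \<in> D \<Longrightarrow> k \<in> set xs \<and> ?b \<in> set xs" for xs
    unfolding A_def B_def C_def D_def using avoid kn by auto
  then have "A \<inter> B = {}" "(A \<union> B) \<inter> C = {}" "(A \<union> B \<union> C) \<inter> D = {}"
    by blast+
  moreover have "finite A" "finite B" "finite C" "finite D"
    unfolding A_def B_def C_def D_def by (simp_all add: finite_tableaux)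
  ultimately have "tableau_sum n Q k s v = sum ?w A + sum ?w B + sum ?w C + sum ?w D"
    unfolding tableau_sum_def tableaux_decompose A_def[symmetric] B_def[symmetric]
      C_def[symmetric] D_def[symmetric]
    by (simp add: sum.union_disjoint)
  then show ?thesis
    unfolding A_def B_def C_def D_def tableau_sum_def by (simp add: sum.reindex inj_on_def)
qed

lemma tableau_sum_rec:
  "tableau_sum n Q k s v = tableau_sum n Q (Suc k) s v
     + zz n Q k v * tableau_sum n Q (Suc k) (s - 1) (v - 1)
     + tableau_sum n Q (Suc k) (s - 1) v * zz n Q (2 * n + 1 - k) (v - of_int (s - 1))
     + zz n Q k v * tableau_sum n Q (Suc k) (s - 2) (v - 1) * zz n Q (2 * n + 1 - k) (v - of_int (s - 1))"
proof -
  have len: "of_nat (length xs) = (of_int t :: complex)" if "xs \<in> tableaux n (Suc k) t" for xs t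
    using that unfolding tableaux_def by (metis (mono_tags) mem_Collect_eq of_int_of_nat_eq)
  show ?thesis
    unfolding tableau_sum_decompose
    unfolding tableau_weight_Cons tableau_weight_snoc tableau_sum_def sum_distrib_left sum_distrib_right
    by (auto simp: len algebra_simps intro!: sum.cong arg_cong2[where f = "(+)"])
qed

end

section \<open>The factors of L\<close>

definition Lfactor :: "nat \<Rightarrow> (nat \<Rightarrow> complex \<Rightarrow> 'f::field) \<Rightarrow> nat \<Rightarrow> complex \<Rightarrow> 'f" where
  "Lfactor n Q i u = xx n Q i (u + of_nat n + 1 - of_nat i)"

lemma Lpart_eq_diff_op_prod: "Lpart n Q m k w = diff_op_prod (Lfactor n Q) m k w"
  by (induction m arbitrary: k) (simp_all add: Lfactor_def Let_def)

(* The twist of the symmetry of the coefficients of the factors k, ..., 2n+3-k; it is 1 for k = 1. *)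
definition Ytwist :: "nat \<Rightarrow> (nat \<Rightarrow> complex \<Rightarrow> 'f::field) \<Rightarrow> nat \<Rightarrow> complex \<Rightarrow> 'f" where
  "Ytwist n Q k v = YY n Q (k - 1) (v + (2 * of_nat n + 3 - of_nat k) / 2)"

lemma Ytwist_nonzero:
  assumes "\<And>b v. 1 \<le> b \<Longrightarrow> b \<le> n \<Longrightarrow> Q b v \<noteq> 0" and "k \<le> n + 1"
  shows "Ytwist n Q k v \<noteq> 0"
  using assms by (auto simp: Ytwist_def YY_def)

lemma xx_unbarred: "k \<le> n \<Longrightarrow> xx n Q k v = zz n Q k v"
  by (simp add: xx_def)

lemma xx_barred:
  assumes "1 \<le> k" "k \<le> n"
  shows "xx n Q (2 * n + 3 - k) v = zz n Q (2 * n + 1 - k) v"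
proof -
  have "\<not> 2 * n + 3 - k \<le> n" "2 * n + 3 - k \<noteq> n + 1" "2 * n + 3 - k \<noteq> n + 2"
    and "2 * n + 1 - (2 * n + 3 - (2 * n + 3 - k)) = 2 * n + 1 - k"
    using assms by simp_all
  then show ?thesis
    unfolding xx_def by (simp only: if_False)
qed

lemma zz_barred:
  assumes "1 \<le> k" "k \<le> n"
  shows "zz n Q (2 * n + 1 - k) v =
    YY n Q (k - 1) (v + (2 * of_nat n - of_nat k + 3) / 2) / YY n Q k (v + (2 * of_nat n - of_nat k + 4) / 2)"
proof -
  have "\<not> 2 * n + 1 - k \<le> n" "2 * n + 1 - (2 * n + 1 - k) = k"
    using assms by simp_all
  then show ?thesis
    unfolding zz_def Let_def by (simp only: if_False)
qed

lemma Lfactor_barred_eq_zz: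
  assumes "1 \<le> k" "k \<le> n"
  shows "Lfactor n Q (Suc k + 2 * (n + 1 - k)) w = zz n Q (2 * n + 1 - k) (w - of_nat (n + 2 - k))"
proof -
  have "Suc k + 2 * (n + 1 - k) = 2 * n + 3 - k"
    and "w + of_nat n + 1 - of_nat (2 * n + 3 - k) = w - of_nat (n + 2 - k)"
    using assms by (simp_all add: of_nat_diff)
  then show ?thesis
    unfolding Lfactor_def xx_barred[OF assms, symmetric] by (simp only:)
qed

lemma Lfactor_unbarred:
  assumes "1 \<le> k" "k \<le> n"
  shows "Lfactor n Q k v = Ytwist n Q (Suc k) v / Ytwist n Q k v"
proof -
  have "v + of_nat n + 1 - of_nat k + of_nat k / 2 = v + (2 * of_nat n + 3 - of_nat (Suc k)) / (2 :: complex)"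
    and "v + of_nat n + 1 - of_nat k + (of_nat k + 1) / 2 = v + (2 * of_nat n + 3 - of_nat k) / (2 :: complex)"
    by (simp_all add: field_simps)
  then show ?thesis
    unfolding Lfactor_def xx_unbarred[OF assms(2)] zz_def if_P[OF assms(2)] Ytwist_def diff_Suc_1
    by (simp only:)
qed

lemma Lfactor_barred:
  assumes "1 \<le> k" "k \<le> n"
  shows "Lfactor n Q (Suc k + 2 * (n + 1 - k)) (v + of_nat (n + 1 - k) + 1) =
    Ytwist n Q k v / Ytwist n Q (Suc k) (v + 1)"
proof -
  have "v + of_nat (n + 1 - k) + 1 - of_nat (n + 2 - k) = v"
    using assms by (simp add: of_nat_diff)
  moreover have "v + (2 * of_nat n - of_nat k + 3) / 2 = v + (2 * of_nat n + 3 - of_nat k) / (2 :: complex)"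
    and "v + (2 * of_nat n - of_nat k + 4) / 2 = v + 1 + (2 * of_nat n + 3 - of_nat (Suc k)) / (2 :: complex)"
    by (simp_all add: field_simps)
  ultimately show ?thesis
    unfolding Lfactor_barred_eq_zz[OF assms] zz_barred[OF assms] Ytwist_def diff_Suc_1 by (simp only:)
qed

lemma Lfactor_middle: "Lfactor n Q (Suc (Suc n)) v = - Lfactor n Q (Suc n) (v - 1)"
  by (simp add: Lfactor_def xx_def algebra_simps)

lemma Lfactor_middle_prod:
  assumes "\<And>v. Q n v \<noteq> 0" and "1 \<le> n"
  shows "Lfactor n Q (Suc n) v * Lfactor n Q (Suc n) (v - 1) = Ytwist n Q (Suc n) (v - 1) / Ytwist n Q (Suc n) v"
proof -
  define s where "s = v + of_nat n / 2"
  have x0: "Lfactor n Q (Suc n) v = Q n s * Q n (s + 2) / (Q n (s + 1))^2"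
    and x1: "Lfactor n Q (Suc n) (v - 1) = Q n (s - 1) * Q n (s + 1) / (Q n s)^2"
    by (simp_all add: Lfactor_def xx_def s_def field_simps)
  have y0: "Ytwist n Q (Suc n) (v - 1) = Q n (s - 1) / Q n (s + 1)"
    and y1: "Ytwist n Q (Suc n) v = Q n s / Q n (s + 2)"
    using assms(2) by (simp_all add: Ytwist_def YY_def dd_def s_def field_simps)
  show ?thesis
    unfolding x0 x1 y0 y1 using assms(1) by (simp add: field_simps power2_eq_square)
qed

(* Splitting off the factors k and 2n+3-k (diff_op_coeff_two_sided) mirrors splitting off the letters
   k and bar k (tableau_sum_rec). *)
lemma Lfactor_coeff_tableau_step:
  assumes k: "1 \<le> k" "k \<le> n" and s: "s \<le> int (n + 1 - k)"
    and inner: "\<And>t w. t \<le> int (n + 1 - k) \<Longrightarrow>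
      diff_op_coeff (Lfactor n Q) (2 * (n + 1 - k)) (Suc k) t w = tableau_sum n Q (Suc k) t (w + of_nat n - of_nat k)"
  shows "diff_op_coeff (Lfactor n Q) (2 * (n + 2 - k)) k s u = tableau_sum n Q k s (u + of_nat n + 1 - of_nat k)"
proof -
  define v where "v = u + of_nat n + 1 - of_nat k"
  let ?E = "diff_op_coeff (Lfactor n Q) (2 * (n + 1 - k)) (Suc k)"
  let ?bar = "zz n Q (2 * n + 1 - k) (v - of_int (s - 1))"
  have len: "2 * (n + 2 - k) = Suc (Suc (2 * (n + 1 - k)))"
    and left: "Lfactor n Q k u = zz n Q k v"
    and arg: "u + of_nat (2 * (n + 1 - k)) + 2 - of_int s - of_nat (n + 2 - k) = v - of_int (s - 1)"
    using k unfolding v_def Lfactor_def by (simp_all add: xx_unbarred of_nat_diff algebra_simps)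
  have "diff_op_coeff (Lfactor n Q) (2 * (n + 2 - k)) k s u =
      ?E s (u + 1) + zz n Q k v * ?E (s - 1) u + ?E (s - 1) (u + 1) * ?bar + zz n Q k v * ?E (s - 2) u * ?bar"
    unfolding len diff_op_coeff_two_sided left Lfactor_barred_eq_zz[OF k] arg ..
  also have "\<dots> = tableau_sum n Q (Suc k) s v + zz n Q k v * tableau_sum n Q (Suc k) (s - 1) (v - 1)
      + tableau_sum n Q (Suc k) (s - 1) v * ?bar + zz n Q k v * tableau_sum n Q (Suc k) (s - 2) (v - 1) * ?bar"
  proof -
    have shift: "?E t w = tableau_sum n Q (Suc k) t w'"
      if "t \<le> int (n + 1 - k)" "w' = w + of_nat n - of_nat k" for t w w'
      using inner that by simp
    have "?E s (u + 1) = tableau_sum n Q (Suc k) s v"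
      and "?E (s - 1) u = tableau_sum n Q (Suc k) (s - 1) (v - 1)"
      and "?E (s - 1) (u + 1) = tableau_sum n Q (Suc k) (s - 1) v"
      and "?E (s - 2) u = tableau_sum n Q (Suc k) (s - 2) (v - 1)"
      by (rule shift; use s in \<open>simp add: v_def\<close>)+
    then show ?thesis by (simp only:)
  qed
  also have "\<dots> = tableau_sum n Q k s v"
    by (rule tableau_sum_rec[OF k(2) s, symmetric])
  finally show ?thesis
    unfolding v_def .
qed

section \<open>Coefficients of L\<close>

lemma adm_sum_eq_tableau_sum:
  "(\<Sum>is\<in>adm n b. \<Prod>k<b. zz n Q (is ! k) ((v - 1/2) + (of_nat b - 1 - 2 * of_nat k) / 2))
     = tableau_sum n Q 1 (int b) (v + of_nat b / 2 - 1)"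
  unfolding adm_eq_tableaux tableau_sum_def tableau_weight_def
  by (auto simp: tableaux_def field_simps intro!: sum.cong prod.cong arg_cong[where f = "zz n Q _"])

lemma TT_lower_half:
  assumes "1 \<le> a" "a \<le> n"
  shows "TT n Q a (u + of_nat a / 2) = tableau_sum n Q 1 (int a) (u + of_nat a - 1)"
proof -
  have arg: "u + of_nat a / 2 + of_nat a / 2 - 1 = u + of_nat a - (1 :: complex)"
    by (simp add: field_simps)
  have "TT n Q a (u + of_nat a / 2) = tableau_sum n Q 1 (int a) (u + of_nat a / 2 + of_nat a / 2 - 1)"
    using assms unfolding TT_def adm_sum_eq_tableau_sum by simp
  then show ?thesis
    unfolding arg .
qed

lemma TT_upper_half:
  assumes "n + 2 \<le> a" "a \<le> 2 * n + 2"
  shows "TT n Q a (u + of_nat a / 2) = - tableau_sum n Q 1 (int (2 * n + 2 - a)) (u + of_nat n)"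
proof -
  define b where "b = 2 * n + 2 - a"
  have arg: "u + of_nat a / 2 + of_nat b / 2 - 1 = u + (of_nat n :: complex)"
    using assms unfolding b_def by (simp add: of_nat_diff field_simps)
  have "TT n Q a (u + of_nat a / 2) = - tableau_sum n Q 1 (int b) (u + of_nat a / 2 + of_nat b / 2 - 1)"
    using assms unfolding TT_def adm_sum_eq_tableau_sum b_def[symmetric] by auto
  then show ?thesis
    unfolding arg unfolding b_def .
qed

context
  fixes n :: nat and Q :: "nat \<Rightarrow> complex \<Rightarrow> 'f::field"
  assumes Q_nonzero: "\<And>b v. 1 \<le> b \<Longrightarrow> b \<le> n \<Longrightarrow> Q b v \<noteq> 0"
    and n_pos: "1 \<le> n" and two_nonzero: "(2::'f) \<noteq> 0"
begin

lemma Lfactor_coeff_skew_palindromic: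
  assumes "1 \<le> k" "k \<le> n + 1"
  shows "skew_palindromic (diff_op_coeff (Lfactor n Q) (2 * (n + 2 - k)) k) (n + 2 - k) (Ytwist n Q k)"
  using assms
proof (induction "n + 1 - k" arbitrary: k)
  case 0
  then have "k = Suc n" by simp
  moreover have "skew_palindromic (diff_op_coeff (Lfactor n Q) 2 (Suc n)) 1 (Ytwist n Q (Suc n))"
    using Q_nonzero n_pos
    by (intro skew_palindromic_two_factors Ytwist_nonzero Lfactor_middle Lfactor_middle_prod) auto
  ultimately show ?case by simp
next
  case (Suc i)
  have k: "1 \<le> k" "k \<le> n"
    using Suc.hyps(2) Suc.prems by simp_all
  have inner: "skew_palindromic (diff_op_coeff (Lfactor n Q) (2 * (n + 1 - k)) (Suc k)) (n + 1 - k) (Ytwist n Q (Suc k))"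
    using Suc.hyps(1)[of "Suc k"] Suc.hyps(2) Suc.prems by simp
  have "skew_palindromic (diff_op_coeff (Lfactor n Q) (Suc (Suc (2 * (n + 1 - k)))) k) (n + 1 - k + 1) (Ytwist n Q k)"
  proof (rule skew_palindromic_extend[OF _ _ _ _ inner])
    show "Ytwist n Q (Suc k) v \<noteq> 0" "Ytwist n Q k v \<noteq> 0" for v
      using Q_nonzero k by (simp_all add: Ytwist_nonzero)
    show "Lfactor n Q k v = Ytwist n Q (Suc k) v / Ytwist n Q k v" for v
      using Lfactor_unbarred[OF k] .
    show "Lfactor n Q (Suc k + 2 * (n + 1 - k)) (v + of_nat (n + 1 - k) + 1) = Ytwist n Q k v / Ytwist n Q (Suc k) (v + 1)" for v
      using Lfactor_barred[OF k] .
  qed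
  moreover have "Suc (Suc (2 * (n + 1 - k))) = 2 * (n + 2 - k)" "n + 1 - k + 1 = n + 2 - k"
    using Suc.hyps by simp_all
  ultimately show ?case by (simp only:)
qed

lemma Lfactor_coeff_centre:
  assumes "1 \<le> k" "k \<le> n + 1"
  shows "diff_op_coeff (Lfactor n Q) (2 * (n + 2 - k)) k (int (n + 2 - k)) u = 0"
  using assms Q_nonzero two_nonzero
  by (intro skew_palindromic_centre[OF Lfactor_coeff_skew_palindromic] Ytwist_nonzero) auto

lemma Lfactor_coeff_eq_tableau_sum:
  assumes "1 \<le> k" "k \<le> n + 1" "s \<le> int (n + 2 - k)"
  shows "diff_op_coeff (Lfactor n Q) (2 * (n + 2 - k)) k s u = tableau_sum n Q k s (u + of_nat n + 1 - of_nat k)"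
  using assms
proof (induction "n + 1 - k" arbitrary: k s u)
  case 0
  then have k: "k = n + 1" and "s \<le> 1" by auto
  then consider "s < 0" | "s = 0" | "s = int (n + 2 - k)" by linarith
  then show ?case
  proof cases
    case 1
    then show ?thesis by (simp add: diff_op_coeff_out_of_range tableau_sum_neg)
  next
    case 2
    then show ?thesis by simp
  next
    case 3
    then show ?thesis
      using Lfactor_coeff_centre[of k u] tableaux_too_long[of k n s] k by (simp add: tableau_sum_def)
  qed
next
  case (Suc i)
  have k: "1 \<le> k" "k \<le> n"
    using Suc.hyps(2) Suc.prems by auto
  show ?case
  proof (cases "s = int (n + 2 - k)")
    case True
    then show ?thesis
      using Lfactor_coeff_centre[of k u] tableaux_too_long[of k n s] k by (simp add: tableau_sum_def)
  next
    case False
    show ?thesis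
    proof (rule Lfactor_coeff_tableau_step[OF k])
      show "s \<le> int (n + 1 - k)"
        using False Suc.prems k by linarith
      show "diff_op_coeff (Lfactor n Q) (2 * (n + 1 - k)) (Suc k) t w =
          tableau_sum n Q (Suc k) t (w + of_nat n - of_nat k)" if "t \<le> int (n + 1 - k)" for t w
        using Suc.hyps(1)[of "Suc k" t w] Suc.hyps(2) that k by (simp add: algebra_simps)
    qed
  qed
qed

lemma Lfactor_coeff_antisymmetric:
  "diff_op_coeff (Lfactor n Q) (2 * n + 2) 1 (int n + 1 + j) v =
    - diff_op_coeff (Lfactor n Q) (2 * n + 2) 1 (int n + 1 - j) (v - of_int j)"
proof -
  have "2 * (n + 2 - 1) = 2 * n + 2" "int (n + 2 - 1) = int n + 1"
    by simp_all
  moreover have "Ytwist n Q 1 = (\<lambda>_. 1)"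
    by (simp add: fun_eq_iff Ytwist_def YY_def)
  ultimately have "skew_palindromic (diff_op_coeff (Lfactor n Q) (2 * n + 2) 1) (int n + 1) (\<lambda>_. 1)"
    using Lfactor_coeff_skew_palindromic[of 1] n_pos by (simp add: add.commute)
  then show ?thesis
    unfolding skew_palindromic_def by simp
qed

lemma TT_eq_neg_Lfactor_coeff:
  assumes a: "a \<le> 2 * n + 2"
  shows "TT n Q a (u + of_nat a / 2) = - diff_op_coeff (Lfactor n Q) (2 * n + 2) 1 (int (2 * n + 2 - a)) u"
proof -
  let ?E = "diff_op_coeff (Lfactor n Q) (2 * n + 2) 1"
  have lower: "?E (int b) v = tableau_sum n Q 1 (int b) (v + of_nat n)" if "b \<le> n + 1" for b v
    using Lfactor_coeff_eq_tableau_sum[of 1 "int b" v] that by simp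
  consider "a = 0" | "1 \<le> a" "a \<le> n" | "a = n + 1" | "n + 2 \<le> a"
    using a by linarith
  then show ?thesis
  proof cases
    case 1
    then show ?thesis
      using Lfactor_coeff_antisymmetric[of "int n + 1" u] by (simp add: TT_def add.commute)
  next
    case 2
    then have "?E (int (2 * n + 2 - a)) u = - ?E (int a) (u - of_nat (n + 1 - a))"
      using Lfactor_coeff_antisymmetric[of "int (n + 1 - a)" u] by (simp add: of_nat_diff algebra_simps)
    then show ?thesis
      using 2 lower[of a] TT_lower_half by (simp add: of_nat_diff algebra_simps)
  next
    case 3
    then show ?thesis
      using Lfactor_coeff_centre[of 1 u] by (simp add: TT_def)
  next
    case 4
    then show ?thesis
      using a lower[of "2 * n + 2 - a" u] TT_upper_half by simp
  qed
qed

end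

theorem mainTheorem5:
  fixes n :: nat and Q :: "nat \<Rightarrow> complex \<Rightarrow> 'f::field" and w :: "nat \<Rightarrow> complex \<Rightarrow> 'f"
  assumes "n \<ge> 2"
    and "alg_indep_Z (\<lambda>(b, u). Q b u) ({1..n} \<times> UNIV)"
    and "\<And>m u. 1 \<le> m \<Longrightarrow> m \<le> 2 * n + 2 \<Longrightarrow> Lop n Q (w m) u = 0"
    and "\<And>u. casorati w [1..int (2 * n + 2)] u \<noteq> 0"
  shows "\<forall>a \<le> 2 * n + 2. \<forall>u.
           TT n Q a (u + of_nat a / 2) =
           casorati w (filter (\<lambda>i. i \<noteq> int a) [0..int (2 * n + 2)]) u
             / casorati w [1..int (2 * n + 2)] u"
proof (intro allI impI)
  fix a u assume a: "a \<le> 2 * n + 2"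
  \<comment> \<open>Algebraic independence is only needed for Q_a(u) \<noteq> 0 and 2 \<noteq> 0 in F.\<close>
  have Qnz: "\<And>b v. 1 \<le> b \<Longrightarrow> b \<le> n \<Longrightarrow> Q b v \<noteq> 0"
    using alg_indep_Z_nonzero[OF assms(2)] by fastforce
  have two: "(2::'f) \<noteq> 0" and n: "1 \<le> n"
    using alg_indep_Z_of_int_nonzero[OF assms(2), of 2] assms(1) by simp_all
  have TT: "TT n Q b (v + of_nat b / 2) = - diff_op_coeff (Lfactor n Q) (2 * n + 2) 1 (int (2 * n + 2 - b)) v"
    if "b \<le> 2 * n + 2" for b v
    by (rule TT_eq_neg_Lfactor_coeff) (use Qnz n two that in auto)
  have top: "diff_op_coeff (Lfactor n Q) (2 * n + 2) 1 (int (2 * n + 2)) u = -1"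
    using TT[of 0 u] by (simp add: TT_def minus_equation_iff[of _ 1])
  have annihilated: "diff_op_prod (Lfactor n Q) (2 * n + 2) 1 (w m) u = 0" if "1 \<le> m" "m \<le> 2 * n + 2" for m
    using assms(3)[OF that] unfolding Lop_def Lpart_eq_diff_op_prod .
  have "casorati w (filter (\<lambda>i. i \<noteq> int a) [0..int (2 * n + 2)]) u / casorati w [1..int (2 * n + 2)] u
      = - diff_op_coeff (Lfactor n Q) (2 * n + 2) 1 (int (2 * n + 2) - int a) u"
    by (rule casorati_ratio_eq_diff_op_coeff[OF annihilated top assms(4) a])
  then show "TT n Q a (u + of_nat a / 2) =
      casorati w (filter (\<lambda>i. i \<noteq> int a) [0..int (2 * n + 2)]) u / casorati w [1..int (2 * n + 2)] u"
    using TT[OF a] a by (simp add: of_nat_diff)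
qed

end
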